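(* Let $G$ be a graph of order $n$ with at least one edge, minimum degree $\delta$, and $\mu(G)=\mu$. If $(x_1,\ldots,x_n)$ is a unit eigenvector of the adjacency matrix of $G$ for the eigenvalue $\mu$, then \[ \min\{x_1,\ldots,x_n\}\leq\sqrt{\frac{\delta}{\mu^{2}+\delta n-\delta^{2}}}. \]
   Context: Graphs are finite and simple. $\mu(G)$ denotes the largest eigenvalue of the adjacency matrix of $G$. A unit eigenvector is one of Euclidean norm 1. *)

theory Defs
  imports "HOL-Analysis.Analysis"
begin

definition simple_graph :: "('n::finite \<Rightarrow> 'n \<Rightarrow> bool) \<Rightarrow> bool" where
  "simple_graph E \<longleftrightarrow> (\<forall>i j. E i j \<longleftrightarrow> E j i) \<and> (\<forall>i. \<not> E i i)"

definition adj_matrix :: "('n::finite \<Rightarrow> 'n \<Rightarrow> bool) \<Rightarrow> real^'n^'n" where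
  "adj_matrix E = (\<chi> i j. if E i j then 1 else 0)"

definition degree :: "('n::finite \<Rightarrow> 'n \<Rightarrow> bool) \<Rightarrow> 'n \<Rightarrow> nat" where
  "degree E i = card {j. E i j}"

definition min_degree :: "('n::finite \<Rightarrow> 'n \<Rightarrow> bool) \<Rightarrow> nat" where
  "min_degree E = Min (range (degree E))"

definition eigenvalues :: "real^'n^'n \<Rightarrow> real set" where
  "eigenvalues A = {l. \<exists>x. x \<noteq> 0 \<and> A *v x = l *\<^sub>R x}"

definition mu :: "('n::finite \<Rightarrow> 'n \<Rightarrow> bool) \<Rightarrow> real" where
  "mu E = Max (eigenvalues (adj_matrix E))"

end

theory Submission
  imports Defs
begin

text \<open>Let \<open>m\<close> be the smallest entry and \<open>u\<close> a vertex of minimum degree \<open>\<delta>\<close>, with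
  neighbourhood \<open>N\<close>. The eigen-equation at \<open>u\<close> and Cauchy-Schwarz give
  \<open>\<mu>\<^sup>2 m\<^sup>2 \<le> \<mu>\<^sup>2 x\<^sub>u\<^sup>2 \<le> \<delta> \<Sum>\<^sub>N x\<^sub>j\<^sup>2\<close>, while the \<open>n - \<delta>\<close> entries outside \<open>N\<close> use up at least
  \<open>(n - \<delta>) m\<^sup>2\<close> of the unit norm, so \<open>\<Sum>\<^sub>N x\<^sub>j\<^sup>2 \<le> 1 - (n - \<delta>) m\<^sup>2\<close>. Rearranging gives
  the bound when \<open>m > 0\<close>; otherwise it is trivial.\<close>

lemma adj_matrix_mult_vec_nth:
  "(adj_matrix E *v x) $ i = (\<Sum>j | E i j. x $ j)"
  unfolding adj_matrix_def matrix_vector_mult_def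
  by (simp add: if_distrib[where f="\<lambda>c. c * y" for y] sum.If_cases Int_def)

lemma min_degree_attained:
  fixes E :: "'n::finite \<Rightarrow> 'n \<Rightarrow> bool"
  obtains u where "degree E u = min_degree E"
proof -
  have "min_degree E \<in> range (degree E)"
    unfolding min_degree_def by (rule Min_in) auto
  then obtain v where "min_degree E = degree E v" by blast
  then show ?thesis using that by metis
qed

lemma min_degree_le_card:
  fixes E :: "'n::finite \<Rightarrow> 'n \<Rightarrow> bool"
  shows "min_degree E \<le> CARD('n)"
proof -
  obtain u where "degree E u = min_degree E" by (rule min_degree_attained)
  then show ?thesis
    unfolding degree_def by (metis card_mono finite subset_UNIV)
qed

lemma eigenvalue_pos_of_pos_eigenvector:
  assumes "E a b" and "\<And>i. 0 < x $ i" and "adj_matrix E *v x = M *\<^sub>R x"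
  shows "0 < M"
proof -
  have "0 < (\<Sum>j | E a j. x $ j)"
    using assms(1,2) by (intro sum_pos) auto
  also have "\<dots> = M * x $ a"
    using arg_cong[OF assms(3), of "\<lambda>v. v $ a"] by (simp add: adj_matrix_mult_vec_nth)
  finally show ?thesis
    using assms(2)[of a] by (simp add: zero_less_mult_iff)
qed

lemma min_entry_sq_mult_le:
  fixes x :: "real^'n" and N :: "'n set"
  assumes "norm x = 1" and "0 \<le> m" and m_le: "\<And>i. m \<le> x $ i"
    and row: "(\<Sum>j\<in>N. x $ j) = M * x $ u"
  shows "m\<^sup>2 * (M\<^sup>2 + real (card N) * CARD('n) - (real (card N))\<^sup>2) \<le> real (card N)"
proof -
  define d where "d = card N"
  have "(\<Sum>j\<in>N. (x $ j)\<^sup>2) + (\<Sum>j\<in>-N. (x $ j)\<^sup>2) = (\<Sum>j\<in>UNIV. (x $ j)\<^sup>2)"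
    by (simp add: Compl_eq_Diff_UNIV sum.subset_diff[of N UNIV])
  also have "\<dots> = x \<bullet> x"
    by (simp add: inner_vec_def power2_eq_square)
  also have "\<dots> = 1"
    using assms(1) by (simp add: dot_square_norm)
  finally have split: "(\<Sum>j\<in>N. (x $ j)\<^sup>2) = 1 - (\<Sum>j\<in>-N. (x $ j)\<^sup>2)" by simp
  have "real (CARD('n) - d) * m\<^sup>2 = (\<Sum>j\<in>-N. m\<^sup>2)"
    by (simp add: d_def Compl_eq_Diff_UNIV card_Diff_subset)
  also have "\<dots> \<le> (\<Sum>j\<in>-N. (x $ j)\<^sup>2)"
    using assms(2) m_le by (intro sum_mono power_mono) auto
  finally have outside: "real (CARD('n) - d) * m\<^sup>2 \<le> (\<Sum>j\<in>-N. (x $ j)\<^sup>2)" .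
  have "M\<^sup>2 * m\<^sup>2 \<le> (M * x $ u)\<^sup>2"
    using assms(2) m_le[of u] by (simp add: power_mult_distrib mult_left_mono power_mono)
  also have "\<dots> = (\<Sum>j\<in>N. x $ j)\<^sup>2"
    by (simp add: row)
  also have "\<dots> \<le> (\<Sum>j\<in>N. (x $ j)\<^sup>2) * d"
    using sum_squared_le_sum_of_squares[of "\<lambda>j. x $ j" N] by (simp add: d_def)
  also have "\<dots> \<le> (1 - real (CARD('n) - d) * m\<^sup>2) * d"
    using split outside by (intro mult_right_mono) auto
  finally have "M\<^sup>2 * m\<^sup>2 \<le> (1 - real (CARD('n) - d) * m\<^sup>2) * d" .
  moreover have "d \<le> CARD('n)"
    unfolding d_def by (simp add: card_mono)
  ultimately show ?thesis
    by (simp add: d_def [symmetric] algebra_simps power2_eq_square)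
qed

lemma min_entry_sq_mult_le_min_degree:
  fixes E :: "'n::finite \<Rightarrow> 'n \<Rightarrow> bool" and x :: "real^'n"
  assumes "norm x = 1" and "adj_matrix E *v x = M *\<^sub>R x"
    and "0 \<le> m" and "\<And>i. m \<le> x $ i"
  shows "m\<^sup>2 * (M\<^sup>2 + real (min_degree E) * CARD('n) - (real (min_degree E))\<^sup>2)
    \<le> real (min_degree E)"
proof -
  obtain u where "degree E u = min_degree E" by (rule min_degree_attained)
  then have card_nbhd: "card {j. E u j} = min_degree E" by (simp add: degree_def)
  have "(\<Sum>j | E u j. x $ j) = M * x $ u"
    using arg_cong[OF assms(2), of "\<lambda>v. v $ u"] by (simp add: adj_matrix_mult_vec_nth)
  from min_entry_sq_mult_le[OF assms(1,3,4) this] show ?thesis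
    unfolding card_nbhd .
qed

theorem lemma1:
  fixes E :: "'n::finite \<Rightarrow> 'n \<Rightarrow> bool" and x :: "real^'n"
  assumes "simple_graph E"
    and "\<exists>i j. E i j"
    and "norm x = 1"
    and "adj_matrix E *v x = mu E *\<^sub>R x"
  shows "Min (range (\<lambda>i. x $ i)) \<le>
    sqrt (real (min_degree E) /
      ((mu E)\<^sup>2 + real (min_degree E) * real CARD('n) - (real (min_degree E))\<^sup>2))"
proof -
  define m where "m = Min (range (\<lambda>i. x $ i))"
  define d where "d = real (min_degree E)"
  define D where "D = (mu E)\<^sup>2 + d * real CARD('n) - d\<^sup>2"
  have m_le: "\<And>i. m \<le> x $ i" unfolding m_def by simp
  have "d\<^sup>2 \<le> d * real CARD('n)"
    using min_degree_le_card[of E] by (simp add: d_def power2_eq_square mult_left_mono)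
  then have D_nonneg: "0 \<le> D"
    unfolding D_def by (simp add: add_increasing)
  have "m \<le> sqrt (d / D)"
  proof (cases "m \<le> 0")
    case True
    moreover have "0 \<le> sqrt (d / D)"
      using D_nonneg by (simp add: d_def)
    ultimately show ?thesis by (rule order_trans)
  next
    case False
    obtain a b where "E a b" using assms(2) by blast
    moreover have "0 < x $ i" for i
      using False m_le[of i] by linarith
    ultimately have "0 < mu E"
      using assms(4) by (rule eigenvalue_pos_of_pos_eigenvector)
    then have "0 < D"
      using \<open>d\<^sup>2 \<le> d * real CARD('n)\<close> zero_less_power[of "mu E" 2]
      unfolding D_def by linarith
    moreover have "m\<^sup>2 * D \<le> d"
      using min_entry_sq_mult_le_min_degree[OF assms(3,4) _ m_le] False
      unfolding D_def d_def by linarith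
    ultimately have "m\<^sup>2 \<le> d / D"
      by (simp add: pos_le_divide_eq)
    then show ?thesis by (rule real_le_rsqrt)
  qed
  then show ?thesis unfolding m_def d_def D_def .
qed

end
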